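(* Let $\mathcal T$ be the suffix tree of a text of length $n$ and $d=\lceil\log_2 n\rceil$. For any sequence of nodes $u_1,\dots,u_t$ of $\mathcal T$ with $u_i=\mathrm{wlink}(u_{i-1},a_{i-1})$ for some symbols $a_{i-1}$ ($2\le i\le t$), at most one of the Weiner links $\mathrm{wlink}(u_{i-1},a_{i-1})$ is difficult.
   Context: For a node $v$ of $\mathcal T$ whose path label is $p$ and a symbol $c$ such that $cp$ occurs in the text, $\mathrm{wlink}(v,c)$ is the locus of $cp$ in $\mathcal T$. A node is heavy if it has at least $d$ leaf descendants and light otherwise. A Weiner link $\mathrm{wlink}(v,a)$ is difficult if its target node is light and its source node $v$ is heavy. *)

theory Defs
  imports Complex_Main "HOL-Library.Sublist"
begin

text \<open>Nodes are identified with their path labels (strings over the alphabet):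
  the root (empty label), the internal nodes (right-branching substrings),
  and the leaves (the nonempty suffixes of T).\<close>

definition st_leaf :: "'a list \<Rightarrow> 'a list \<Rightarrow> bool" where
  "st_leaf T p \<longleftrightarrow> (\<exists>i < length T. p = drop i T)"

definition st_node :: "'a list \<Rightarrow> 'a list \<Rightarrow> bool" where
  "st_node T p \<longleftrightarrow> sublist p T \<and>
     (p = [] \<or> st_leaf T p \<or>
      (\<exists>a b. a \<noteq> b \<and> sublist (p @ [a]) T \<and> sublist (p @ [b]) T))"

definition leaf_desc :: "'a list \<Rightarrow> 'a list \<Rightarrow> 'a list set" where
  "leaf_desc T p = {s. st_leaf T s \<and> prefix p s}"

definition locus :: "'a list \<Rightarrow> 'a list \<Rightarrow> 'a list" where
  "locus T s = (THE v. st_node T v \<and> prefix s v \<and>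
      (\<forall>w. st_node T w \<and> prefix s w \<longrightarrow> length v \<le> length w))"

definition wlink :: "'a list \<Rightarrow> 'a list \<Rightarrow> 'a \<Rightarrow> 'a list" where
  "wlink T v c = locus T (c # v)"

definition heavy :: "'a list \<Rightarrow> nat \<Rightarrow> 'a list \<Rightarrow> bool" where
  "heavy T d v \<longleftrightarrow> card (leaf_desc T v) \<ge> d"

definition difficult :: "'a list \<Rightarrow> nat \<Rightarrow> 'a list \<Rightarrow> 'a \<Rightarrow> bool" where
  "difficult T d v c \<longleftrightarrow> heavy T d v \<and> \<not> heavy T d (wlink T v c)"

end

theory Submission
  imports Defs
begin

text \<open>Walking along a Weiner link prepends a symbol, so the leaves below the target are, after
  dropping that symbol, leaves below the source; hence the number of leaf descendants never
  increases along a chain of Weiner links. A link is difficult exactly when this number drops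
  from at least \<open>d\<close> to below \<open>d\<close>, which a non-increasing sequence does at most once.
  Neither the value of \<open>d\<close> nor the unique terminator plays a role.\<close>

lemma prefix_of_diverging:
  assumes "prefix s (p @ b # xs)" and "prefix s (p @ c # ys)" and "b \<noteq> c"
  shows "prefix s p"
  using assms
proof (induction p arbitrary: s)
  case Nil
  then show ?case by (cases s) auto
next
  case (Cons x p)
  then show ?case by (cases s) auto
qed

lemma st_node_branching:
  assumes "sublist (p @ b # xs) T" and "sublist (p @ c # ys) T" and "b \<noteq> c"
  shows "st_node T p"
proof -
  have "sublist (p @ [b]) T" "sublist (p @ [c]) T"
    using assms(1,2) sublist_order.dual_order.trans sublist_append_rightI by fastforce+
  then show ?thesis
    unfolding st_node_def using assms(3) sublist_order.dual_order.trans sublist_append_rightI by blast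
qed

lemma st_node_extending_substring:
  assumes "sublist s T" and "s \<noteq> []"
  obtains v where "st_node T v" and "prefix s v"
proof -
  obtain xs ys where T: "T = xs @ s @ ys" using assms(1) by (auto simp: sublist_def)
  then have "st_leaf T (s @ ys)"
    unfolding st_leaf_def using assms(2) by (intro exI[of _ "length xs"]) auto
  then have "st_node T (s @ ys)" using T unfolding st_node_def by auto
  then show ?thesis using that by simp
qed

text \<open>Two distinct shortest nodes below \<open>s\<close> would diverge at a strictly shorter branching
  node that still lies below \<open>s\<close>.\<close>
lemma shortest_st_node_extending_unique:
  assumes v: "st_node T v" "prefix s v" and w: "st_node T w" "prefix s w"
    and v_min: "\<And>x. st_node T x \<Longrightarrow> prefix s x \<Longrightarrow> length v \<le> length x"
    and w_min: "\<And>x. st_node T x \<Longrightarrow> prefix s x \<Longrightarrow> length w \<le> length x"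
  shows "w = v"
proof (rule ccontr)
  assume "w \<noteq> v"
  moreover have "length w = length v" using v_min[OF w] w_min[OF v] by simp
  ultimately have "w \<parallel> v" by (rule not_equal_is_parallel)
  then obtain p b xs c ys where "b \<noteq> c" and wp: "w = p @ b # xs" and vp: "v = p @ c # ys"
    using parallel_decomp[OF \<open>w \<parallel> v\<close>] by blast
  have s_p: "prefix s p"
    using w(2) v(2) \<open>b \<noteq> c\<close> unfolding wp vp by (rule prefix_of_diverging)
  have "sublist w T" "sublist v T" using v(1) w(1) unfolding st_node_def by blast+
  then have "st_node T p"
    using \<open>b \<noteq> c\<close> unfolding wp vp by (rule st_node_branching)
  then have "length w \<le> length p" using w_min s_p by blast
  then show False using wp by simp
qed

lemma locus_of_substring:
  assumes "sublist s T" and "s \<noteq> []"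
  shows "st_node T (locus T s)" and "prefix s (locus T s)"
proof -
  let ?P = "\<lambda>v. st_node T v \<and> prefix s v"
  obtain v where v: "?P v" and v_min: "\<And>x. ?P x \<Longrightarrow> length v \<le> length x"
    using st_node_extending_substring[OF assms] ex_has_least_nat[where m = length and P = ?P]
    by metis
  have "locus T s = v"
    unfolding locus_def
  proof (rule the_equality)
    fix w assume "st_node T w \<and> prefix s w \<and> (\<forall>x. ?P x \<longrightarrow> length w \<le> length x)"
    then show "w = v" using shortest_st_node_extending_unique v v_min by blast
  qed (use v v_min in blast)
  then show "st_node T (locus T s)" and "prefix s (locus T s)" using v by simp_all
qed

lemma finite_leaf_desc: "finite (leaf_desc T v)"
proof (rule finite_subset)
  show "leaf_desc T v \<subseteq> (\<lambda>i. drop i T) ` {..<length T}"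
    unfolding leaf_desc_def st_leaf_def by auto
qed simp

lemma leaf_desc_Cons_tl_subset:
  assumes "v \<noteq> []"
  shows "tl ` leaf_desc T (c # v) \<subseteq> leaf_desc T v"
proof
  fix x assume "x \<in> tl ` leaf_desc T (c # v)"
  then obtain i where i: "i < length T" "prefix (c # v) (drop i T)" and x: "x = tl (drop i T)"
    unfolding leaf_desc_def st_leaf_def by auto
  then have "prefix v x" by (auto simp: prefix_def)
  then have "Suc i < length T" using x assms by (cases "Suc i < length T") (auto simp: tl_drop)
  moreover have "x = drop (Suc i) T" using x by (simp add: drop_Suc tl_drop)
  ultimately show "x \<in> leaf_desc T v"
    using \<open>prefix v x\<close> unfolding leaf_desc_def st_leaf_def by blast
qed

lemma card_leaf_desc_Cons_le: "card (leaf_desc T (c # v)) \<le> card (leaf_desc T v)"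
proof (cases "v = []")
  case True
  then have "leaf_desc T (c # v) \<subseteq> leaf_desc T v" unfolding leaf_desc_def by auto
  then show ?thesis by (simp add: card_mono finite_leaf_desc)
next
  case False
  have "inj_on tl (leaf_desc T (c # v))"
    by (rule inj_onI) (auto simp: leaf_desc_def prefix_def)
  then have "card (leaf_desc T (c # v)) = card (tl ` leaf_desc T (c # v))"
    by (simp add: card_image)
  also have "\<dots> \<le> card (leaf_desc T v)"
    using leaf_desc_Cons_tl_subset[OF False] by (simp add: card_mono finite_leaf_desc)
  finally show ?thesis .
qed

lemma leaf_desc_antimono:
  assumes "prefix p q"
  shows "leaf_desc T q \<subseteq> leaf_desc T p"
  using assms prefix_order.trans unfolding leaf_desc_def by blast

lemma card_leaf_desc_wlink_le:
  assumes "sublist (c # v) T"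
  shows "card (leaf_desc T (wlink T v c)) \<le> card (leaf_desc T v)"
proof -
  have "leaf_desc T (wlink T v c) \<subseteq> leaf_desc T (c # v)"
    using leaf_desc_antimono locus_of_substring(2)[OF assms] unfolding wlink_def by blast
  then have "card (leaf_desc T (wlink T v c)) \<le> card (leaf_desc T (c # v))"
    by (simp add: card_mono finite_leaf_desc)
  also have "\<dots> \<le> card (leaf_desc T v)" by (rule card_leaf_desc_Cons_le)
  finally show ?thesis .
qed

lemma nonincreasing_steps_antimono:
  fixes f :: "nat \<Rightarrow> 'b::order"
  assumes steps: "\<And>k. m < k \<Longrightarrow> k \<le> t \<Longrightarrow> f k \<le> f (k - 1)"
    and "m \<le> i" and "i \<le> j" and "j \<le> t"
  shows "f j \<le> f i"
  using assms(3,4)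
proof (induction j rule: dec_induct)
  case base
  then show ?case by simp
next
  case (step j)
  have "f (Suc j) \<le> f j" using steps[of "Suc j"] step.prems \<open>m \<le> i\<close> \<open>i \<le> j\<close> by simp
  also have "\<dots> \<le> f i" using step.IH step.prems by simp
  finally show ?case .
qed

lemma card_threshold_crossings_le_1:
  fixes f :: "nat \<Rightarrow> 'b::linorder"
  assumes steps: "\<And>k. m < k \<Longrightarrow> k \<le> t \<Longrightarrow> f k \<le> f (k - 1)"
  shows "card {k \<in> {Suc m..t}. d \<le> f (k - 1) \<and> f k < d} \<le> 1"
proof -
  let ?C = "{k \<in> {Suc m..t}. d \<le> f (k - 1) \<and> f k < d}"
  have no_two: False if "i \<in> ?C" "j \<in> ?C" "i < j" for i j
  proof -
    have "f (j - 1) \<le> f i"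
      using that nonincreasing_steps_antimono[where f = f and m = m and t = t, OF steps]
      by auto
    then show False using that(1,2) by auto
  qed
  have "\<forall>i\<in>?C. \<forall>j\<in>?C. i = j"
  proof (intro ballI)
    fix i j assume "i \<in> ?C" "j \<in> ?C"
    then show "i = j" by (cases i j rule: linorder_cases) (use no_two in blast)+
  qed
  then show ?thesis by (simp add: card_le_Suc0_iff_eq)
qed

theorem proposition7:
  fixes T :: "'a list" and n d t :: nat and u :: "nat \<Rightarrow> 'a list" and a :: "nat \<Rightarrow> 'a"
  assumes "length T = n" and "n \<ge> 1"
    and "last T \<notin> set (butlast T)"
    and "d = nat \<lceil>log 2 (real n)\<rceil>"
    and "\<forall>i. 1 \<le> i \<and> i \<le> t \<longrightarrow> st_node T (u i)"
    and "\<forall>i. 2 \<le> i \<and> i \<le> t \<longrightarrow>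
           sublist (a (i - 1) # u (i - 1)) T \<and> u i = wlink T (u (i - 1)) (a (i - 1))"
  shows "card {i \<in> {2..t}. difficult T d (u (i - 1)) (a (i - 1))} \<le> 1"
proof -
  define L where "L i = card (leaf_desc T (u i))" for i
  have "L k \<le> L (k - 1)" if "1 < k" "k \<le> t" for k
    using assms(6) that card_leaf_desc_wlink_le unfolding L_def
    by (metis Suc_1 Suc_leI)
  then have "card {k \<in> {Suc 1..t}. d \<le> L (k - 1) \<and> L k < d} \<le> 1"
    by (rule card_threshold_crossings_le_1)
  moreover have "{i \<in> {2..t}. difficult T d (u (i - 1)) (a (i - 1))}
      = {k \<in> {Suc 1..t}. d \<le> L (k - 1) \<and> L k < d}"
    using assms(6) unfolding difficult_def heavy_def L_def by (auto simp: not_le)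
  ultimately show ?thesis by simp
qed

end
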